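(* Let $n\ge1$, let $\preceq$ be an admissible order on $L([0,1])$, let $F\colon L([0,1])\times L([0,1])\to L([0,1])$, $G\colon L([0,1])^n\to L([0,1])$ be functions and let $m\colon 2^N\to L([0,1])$ be an IV fuzzy measure with respect to $\preceq$. Then: (i) if $F$ is non-decreasing in the second variable, the triplet $(m,F,\vee)$ satisfies Condition (WDS) for any $m$; (ii) if $G=f\circ \mathrm{Proj}_1$ or $G=f\circ\vee$ for some function $f\colon L([0,1])\to L([0,1])$, then the triplet $(m,\wedge,G)$ satisfies Condition (WDS) for any $m$; (iii) the triplet $(m,\wedge,\vee)$ satisfies Condition (WDS) for any $m$.
   Context: $N=\{1,\dots,n\}$. $L([0,1])=\{[a,b]: 0\le a\le b\le 1\}$, $\mathbf 0=[0,0]$, $\mathbf 1=[1,1]$. $[a,b]\le_{spo}[c,d]$ iff $a\le c$ and $b\le d$. An admissible order $\preceq$ on $L([0,1])$ is a total order such that $X\le_{spo}Y$ implies $X\preceq Y$. $\vee$ and $\wedge$ denote maximum and minimum with respect to $\preceq$ (as $n$-ary or binary functions on $L([0,1])$). An IV fuzzy measure w.r.t. $\preceq$ is $m\colon 2^N\to L([0,1])$ with $m(\emptyset)=\mathbf 0$, $m(N)=\mathbf 1$, $m(A)\preceq m(B)$ for $A\subseteq B$. $\mathrm{Proj}_1(X_1,\dots,X_n)=X_1$. Monotonicity is w.r.t. $\preceq$. For a permutation $\sigma$ of $N$, $E_{\sigma(i)}=\{\sigma(i),\dots,\sigma(n)\}$. A triplet $(m,F,G)$ satisfies Condition (WDS)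 if for all $X_1,\dots,X_n\in L([0,1])$ and all permutations $\sigma_1,\sigma_2$ of $N$ with $X_{\sigma_j(1)}\preceq\dots\preceq X_{\sigma_j(n)}$ ($j=1,2$) one has $G\big(F(X_{\sigma_1(1)},m(E_{\sigma_1(1)})),\dots,F(X_{\sigma_1(n)},m(E_{\sigma_1(n)}))\big)=G\big(F(X_{\sigma_2(1)},m(E_{\sigma_2(1)})),\dots,F(X_{\sigma_2(n)},m(E_{\sigma_2(n)}))\big)$. *)

theory Defs
  imports Complex_Main "HOL-Combinatorics.Permutations"
begin

type_synonym ival = "real \<times> real"

definition LI :: "ival set" where
  "LI = {(a, b). 0 \<le> a \<and> a \<le> b \<and> b \<le> 1}"

definition spo_le :: "ival \<Rightarrow> ival \<Rightarrow> bool" where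
  "spo_le X Y \<longleftrightarrow> fst X \<le> fst Y \<and> snd X \<le> snd Y"

definition admissible_order :: "(ival \<Rightarrow> ival \<Rightarrow> bool) \<Rightarrow> bool" where
  "admissible_order le \<longleftrightarrow>
     (\<forall>X\<in>LI. le X X) \<and>
     (\<forall>X\<in>LI. \<forall>Y\<in>LI. le X Y \<and> le Y X \<longrightarrow> X = Y) \<and>
     (\<forall>X\<in>LI. \<forall>Y\<in>LI. \<forall>Z\<in>LI. le X Y \<and> le Y Z \<longrightarrow> le X Z) \<and>
     (\<forall>X\<in>LI. \<forall>Y\<in>LI. le X Y \<or> le Y X) \<and>
     (\<forall>X\<in>LI. \<forall>Y\<in>LI. spo_le X Y \<longrightarrow> le X Y)"

definition ivmax :: "(ival \<Rightarrow> ival \<Rightarrow> bool) \<Rightarrow> ival list \<Rightarrow> ival" where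
  "ivmax le xs = (THE x. x \<in> set xs \<and> (\<forall>y\<in>set xs. le y x))"

definition ivmin :: "(ival \<Rightarrow> ival \<Rightarrow> bool) \<Rightarrow> ival \<Rightarrow> ival \<Rightarrow> ival" where
  "ivmin le X Y = (if le X Y then X else Y)"

definition iv_fuzzy_measure :: "(ival \<Rightarrow> ival \<Rightarrow> bool) \<Rightarrow> nat \<Rightarrow> (nat set \<Rightarrow> ival) \<Rightarrow> bool" where
  "iv_fuzzy_measure le n m \<longleftrightarrow>
     (\<forall>A. A \<subseteq> {1..n} \<longrightarrow> m A \<in> LI) \<and>
     m {} = (0, 0) \<and> m {1..n} = (1, 1) \<and>
     (\<forall>A B. A \<subseteq> B \<and> B \<subseteq> {1..n} \<longrightarrow> le (m A) (m B))"

text \<open>Condition (WDS). E_{sigma(i)} = sigma ` {i..n}.\<close>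
definition WDS :: "(ival \<Rightarrow> ival \<Rightarrow> bool) \<Rightarrow> nat \<Rightarrow> (nat set \<Rightarrow> ival)
    \<Rightarrow> (ival \<Rightarrow> ival \<Rightarrow> ival) \<Rightarrow> (ival list \<Rightarrow> ival) \<Rightarrow> bool" where
  "WDS le n m F G \<longleftrightarrow>
     (\<forall>X :: nat \<Rightarrow> ival. (\<forall>i\<in>{1..n}. X i \<in> LI) \<longrightarrow>
       (\<forall>\<sigma>1 \<sigma>2. \<sigma>1 permutes {1..n} \<longrightarrow> \<sigma>2 permutes {1..n} \<longrightarrow>
          (\<forall>i\<in>{1..<n}. le (X (\<sigma>1 i)) (X (\<sigma>1 (Suc i)))) \<longrightarrow>
          (\<forall>i\<in>{1..<n}. le (X (\<sigma>2 i)) (X (\<sigma>2 (Suc i)))) \<longrightarrow>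
          G (map (\<lambda>i. F (X (\<sigma>1 i)) (m (\<sigma>1 ` {i..n}))) [1..<n+1])
          = G (map (\<lambda>i. F (X (\<sigma>2 i)) (m (\<sigma>2 ` {i..n}))) [1..<n+1])))"

end

theory Submission
  imports Defs
begin

text \<open>Let \<sigma>1 and \<sigma>2 both sort X. For a position i along \<sigma>1 let k be the first position along
\<sigma>2 carrying the value X(\<sigma>1 i). Every element of E_{\<sigma>1(i)} has a value at least X(\<sigma>1 i), so it
sits at a position at least k along \<sigma>2, i.e. E_{\<sigma>1(i)} is contained in E_{\<sigma>2(k)}. By monotonicity
of m and of F in its second argument, every term of the \<sigma>1-tuple is dominated by a term of the
\<sigma>2-tuple and vice versa, so the two maxima agree; (iii) is the case F = \<wedge>, and post-composing
G with any f preserves (WDS). For G = f \<circ> Proj_1 both tuples start with F(min X, m(N)).\<close>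

lemma admissible_orderD:
  assumes "admissible_order le"
  shows admissible_order_refl: "X \<in> LI \<Longrightarrow> le X X"
    and admissible_order_antisym: "X \<in> LI \<Longrightarrow> Y \<in> LI \<Longrightarrow> le X Y \<Longrightarrow> le Y X \<Longrightarrow> X = Y"
    and admissible_order_trans:
      "X \<in> LI \<Longrightarrow> Y \<in> LI \<Longrightarrow> Z \<in> LI \<Longrightarrow> le X Y \<Longrightarrow> le Y Z \<Longrightarrow> le X Z"
    and admissible_order_total: "X \<in> LI \<Longrightarrow> Y \<in> LI \<Longrightarrow> le X Y \<or> le Y X"
  using assms unfolding admissible_order_def by blast+

lemma iv_fuzzy_measureD:
  assumes "iv_fuzzy_measure le n m"
  shows iv_fuzzy_measure_in_LI: "A \<subseteq> {1..n} \<Longrightarrow> m A \<in> LI"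
    and iv_fuzzy_measure_mono: "A \<subseteq> B \<Longrightarrow> B \<subseteq> {1..n} \<Longrightarrow> le (m A) (m B)"
  using assms unfolding iv_fuzzy_measure_def by blast+

lemma admissible_order_has_greatest:
  assumes "admissible_order le" "set xs \<subseteq> LI" "xs \<noteq> []"
  shows "\<exists>x\<in>set xs. \<forall>y\<in>set xs. le y x"
  using assms(2,3)
proof (induction xs)
  case Nil
  then show ?case by simp
next
  case (Cons a xs)
  then have a: "a \<in> LI" and xs: "set xs \<subseteq> LI" by auto
  show ?case
  proof (cases "xs = []")
    case True
    then show ?thesis using admissible_order_refl[OF assms(1) a] by simp
  next
    case False
    then obtain M where M: "M \<in> set xs" "\<forall>y\<in>set xs. le y M"
      using Cons.IH[OF xs] by blast
    have "M \<in> LI" using M(1) xs by blast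
    consider "le a M" | "le M a"
      using admissible_order_total[OF assms(1) a \<open>M \<in> LI\<close>] by blast
    then show ?thesis
    proof cases
      case 1
      then show ?thesis using M by auto
    next
      case 2
      have "\<forall>y\<in>set xs. le y a"
        using M(2) xs admissible_order_trans[OF assms(1) _ \<open>M \<in> LI\<close> a _ 2] by blast
      then show ?thesis using admissible_order_refl[OF assms(1) a] by auto
    qed
  qed
qed

lemma ivmax_is_greatest:
  assumes "admissible_order le" "set xs \<subseteq> LI" "xs \<noteq> []"
  shows ivmax_in_set: "ivmax le xs \<in> set xs"
    and ivmax_greatest: "y \<in> set xs \<Longrightarrow> le y (ivmax le xs)"
proof -
  obtain x where x: "x \<in> set xs" "\<forall>y\<in>set xs. le y x"
    using admissible_order_has_greatest[OF assms] by blast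
  have "\<exists>!x. x \<in> set xs \<and> (\<forall>y\<in>set xs. le y x)"
    using x admissible_order_antisym[OF assms(1)] assms(2) by blast
  then have "ivmax le xs \<in> set xs \<and> (\<forall>y\<in>set xs. le y (ivmax le xs))"
    unfolding ivmax_def by (rule theI')
  then show "ivmax le xs \<in> set xs" and "y \<in> set xs \<Longrightarrow> le y (ivmax le xs)" by auto
qed

lemma ivmax_eqI:
  assumes "admissible_order le"
    and "set xs \<subseteq> LI" "xs \<noteq> []" "set ys \<subseteq> LI" "ys \<noteq> []"
    and "\<forall>x\<in>set xs. \<exists>y\<in>set ys. le x y" "\<forall>y\<in>set ys. \<exists>x\<in>set xs. le y x"
  shows "ivmax le xs = ivmax le ys"
proof -
  have dominated: "le (ivmax le as) (ivmax le bs)"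
    if as: "set as \<subseteq> LI" "as \<noteq> []" and bs: "set bs \<subseteq> LI" "bs \<noteq> []"
      and "\<forall>a\<in>set as. \<exists>b\<in>set bs. le a b"
    for as bs
  proof -
    obtain b where "b \<in> set bs" "le (ivmax le as) b"
      using \<open>\<forall>a\<in>set as. \<exists>b\<in>set bs. le a b\<close> ivmax_in_set[OF assms(1) as] by blast
    then show ?thesis
      using admissible_order_trans[OF assms(1)] ivmax_greatest[OF assms(1) bs]
        ivmax_in_set[OF assms(1) as] ivmax_in_set[OF assms(1) bs] as(1) bs(1)
      by blast
  qed
  show ?thesis
    using admissible_order_antisym[OF assms(1)] dominated[OF assms(2-6)] dominated[OF assms(4,5,2,3,7)]
      ivmax_in_set[OF assms(1-3)] ivmax_in_set[OF assms(1,4,5)] assms(2,4)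
    by blast
qed

definition sorting_perm :: "(ival \<Rightarrow> ival \<Rightarrow> bool) \<Rightarrow> nat \<Rightarrow> (nat \<Rightarrow> ival) \<Rightarrow> (nat \<Rightarrow> nat) \<Rightarrow> bool"
  where "sorting_perm le n X \<sigma> \<longleftrightarrow>
    \<sigma> permutes {1..n} \<and> (\<forall>i\<in>{1..<n}. le (X (\<sigma> i)) (X (\<sigma> (Suc i))))"

lemma sorting_perm_mono:
  assumes "admissible_order le" "\<forall>i\<in>{1..n}. X i \<in> LI" "sorting_perm le n X \<sigma>"
    and "1 \<le> a" "a \<le> b" "b \<le> n"
  shows "le (X (\<sigma> a)) (X (\<sigma> b))"
  using assms(5,6)
proof (induction b rule: dec_induct)
  case base
  have "\<sigma> a \<in> {1..n}"
    using assms(3-6) permutes_in_image unfolding sorting_perm_def by fastforce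
  then show ?case using admissible_order_refl[OF assms(1)] assms(2) by blast
next
  case (step k)
  have "\<sigma> a \<in> {1..n}" "\<sigma> k \<in> {1..n}" "\<sigma> (Suc k) \<in> {1..n}"
    using assms(3,4) step(1,2,4) permutes_in_image unfolding sorting_perm_def by fastforce+
  moreover have "le (X (\<sigma> k)) (X (\<sigma> (Suc k)))"
    using assms(3,4) step(1,2,4) unfolding sorting_perm_def by auto
  ultimately show ?case
    using admissible_order_trans[OF assms(1)] assms(2) step by (meson Suc_leD)
qed

lemma sorting_perm_upper_set_subset:
  assumes "admissible_order le" "\<forall>i\<in>{1..n}. X i \<in> LI"
    and \<sigma>1: "sorting_perm le n X \<sigma>1" and \<sigma>2: "sorting_perm le n X \<sigma>2"
    and i: "i \<in> {1..n}"
  shows "\<exists>k\<in>{1..n}. X (\<sigma>2 k) = X (\<sigma>1 i) \<and> \<sigma>1 ` {i..n} \<subseteq> \<sigma>2 ` {k..n}"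
proof -
  have perm1: "\<sigma>1 permutes {1..n}" and perm2: "\<sigma>2 permutes {1..n}"
    using \<sigma>1 \<sigma>2 unfolding sorting_perm_def by blast+
  define P where "P k \<longleftrightarrow> k \<in> {1..n} \<and> X (\<sigma>2 k) = X (\<sigma>1 i)" for k
  have "\<sigma>1 i \<in> \<sigma>2 ` {1..n}"
    using i permutes_in_image[OF perm1] permutes_image[OF perm2] by simp
  then have "\<exists>k. P k" unfolding P_def by force
  define k where "k = (LEAST k. P k)"
  have k: "P k" unfolding k_def using \<open>\<exists>k. P k\<close> by (metis LeastI)
  have "\<sigma>1 ` {i..n} \<subseteq> \<sigma>2 ` {k..n}"
  proof
    fix y assume "y \<in> \<sigma>1 ` {i..n}"
    then obtain t where t: "t \<in> {i..n}" "y = \<sigma>1 t" by blast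
    with i have "y \<in> \<sigma>2 ` {1..n}"
      using permutes_in_image[OF perm1] permutes_image[OF perm2] by simp
    then obtain s where s: "s \<in> {1..n}" "\<sigma>2 s = y" by blast
    have "k \<le> s"
    proof (rule ccontr)
      assume "\<not> k \<le> s"
      have "le (X y) (X (\<sigma>1 i))"
        using sorting_perm_mono[OF assms(1,2) \<sigma>2, of s k] s k \<open>\<not> k \<le> s\<close> unfolding P_def by auto
      moreover have "le (X (\<sigma>1 i)) (X y)"
        using sorting_perm_mono[OF assms(1,2) \<sigma>1, of i t] i t by auto
      ultimately have "X y = X (\<sigma>1 i)"
        using admissible_order_antisym[OF assms(1)] assms(2) i s(1)
          permutes_in_image[OF perm1] permutes_in_image[OF perm2] \<open>\<sigma>2 s = y\<close> by blast
      then have "P s" using s unfolding P_def by simp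
      then show False using \<open>\<not> k \<le> s\<close> Least_le unfolding k_def by blast
    qed
    then show "y \<in> \<sigma>2 ` {k..n}" using s by auto
  qed
  then show ?thesis using k unfolding P_def by blast
qed

lemma sorting_perm_first_eq:
  assumes "admissible_order le" "\<forall>i\<in>{1..n}. X i \<in> LI" "n \<ge> 1"
    and "sorting_perm le n X \<sigma>1" "sorting_perm le n X \<sigma>2"
  shows "X (\<sigma>1 1) = X (\<sigma>2 1)"
proof -
  have first_le: "le (X (\<sigma> 1)) (X (\<sigma>' 1))" and first_in: "X (\<sigma> 1) \<in> LI"
    if \<sigma>: "sorting_perm le n X \<sigma>" and \<sigma>': "sorting_perm le n X \<sigma>'" for \<sigma> \<sigma>'
  proof -
    have perm: "\<sigma> permutes {1..n}" and perm': "\<sigma>' permutes {1..n}"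
      using \<sigma> \<sigma>' unfolding sorting_perm_def by blast+
    have "\<sigma>' 1 \<in> \<sigma> ` {1..n}"
      using assms(3) permutes_in_image[OF perm'] permutes_image[OF perm] by simp
    then obtain k where "k \<in> {1..n}" "\<sigma> k = \<sigma>' 1" by (metis imageE)
    then show "le (X (\<sigma> 1)) (X (\<sigma>' 1))"
      using sorting_perm_mono[OF assms(1,2) \<sigma>, of 1 k] by auto
    show "X (\<sigma> 1) \<in> LI" using assms(2,3) permutes_in_image[OF perm] by simp
  qed
  show ?thesis
    using admissible_order_antisym[OF assms(1)] first_le first_in assms(4,5) by blast
qed

definition wds_terms :: "nat \<Rightarrow> (nat set \<Rightarrow> ival) \<Rightarrow> (ival \<Rightarrow> ival \<Rightarrow> ival)
    \<Rightarrow> (nat \<Rightarrow> ival) \<Rightarrow> (nat \<Rightarrow> nat) \<Rightarrow> ival list"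
  where "wds_terms n m F X \<sigma> = map (\<lambda>i. F (X (\<sigma> i)) (m (\<sigma> ` {i..n}))) [1..<n+1]"

lemma WDS_iff:
  "WDS le n m F G \<longleftrightarrow>
     (\<forall>X \<sigma>1 \<sigma>2. (\<forall>i\<in>{1..n}. X i \<in> LI) \<longrightarrow> sorting_perm le n X \<sigma>1 \<longrightarrow> sorting_perm le n X \<sigma>2 \<longrightarrow>
        G (wds_terms n m F X \<sigma>1) = G (wds_terms n m F X \<sigma>2))"
  unfolding WDS_def sorting_perm_def wds_terms_def by blast

lemma set_wds_terms:
  "set (wds_terms n m F X \<sigma>) = (\<lambda>i. F (X (\<sigma> i)) (m (\<sigma> ` {i..n}))) ` {1..n}"
  unfolding wds_terms_def set_map Suc_eq_plus1[symmetric] set_upt atLeastLessThanSuc_atLeastAtMost ..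

lemma hd_wds_terms:
  assumes "n \<ge> 1" "\<sigma> permutes {1..n}"
  shows "hd (wds_terms n m F X \<sigma>) = F (X (\<sigma> 1)) (m {1..n})"
  using assms by (simp add: wds_terms_def upt_conv_Cons permutes_image del: upt_Suc)

lemma wds_terms_in_LI:
  assumes "\<forall>X\<in>LI. \<forall>Y\<in>LI. F X Y \<in> LI" "iv_fuzzy_measure le n m"
    and "\<forall>i\<in>{1..n}. X i \<in> LI" "\<sigma> permutes {1..n}"
  shows "set (wds_terms n m F X \<sigma>) \<subseteq> LI"
proof (unfold set_wds_terms, intro image_subsetI)
  fix i assume i: "i \<in> {1..n}"
  have "\<sigma> ` {i..n} \<subseteq> \<sigma> ` {1..n}"
    using i by (intro image_mono) simp
  then have "m (\<sigma> ` {i..n}) \<in> LI"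
    using iv_fuzzy_measure_in_LI[OF assms(2)] permutes_image[OF assms(4)] by simp
  moreover have "X (\<sigma> i) \<in> LI"
    using i assms(3) permutes_in_image[OF assms(4)] by blast
  ultimately show "F (X (\<sigma> i)) (m (\<sigma> ` {i..n})) \<in> LI"
    using assms(1) by blast
qed

lemma wds_terms_dominated:
  assumes "admissible_order le" "\<forall>X\<in>LI. \<forall>Y\<in>LI. F X Y \<in> LI" "iv_fuzzy_measure le n m"
    and F_mono: "\<forall>X\<in>LI. \<forall>Y\<in>LI. \<forall>Z\<in>LI. le Y Z \<longrightarrow> le (F X Y) (F X Z)"
    and X: "\<forall>i\<in>{1..n}. X i \<in> LI"
    and \<sigma>1: "sorting_perm le n X \<sigma>1" and \<sigma>2: "sorting_perm le n X \<sigma>2"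
  shows "\<forall>a\<in>set (wds_terms n m F X \<sigma>1). \<exists>b\<in>set (wds_terms n m F X \<sigma>2). le a b"
proof
  have perm1: "\<sigma>1 permutes {1..n}" and perm2: "\<sigma>2 permutes {1..n}"
    using \<sigma>1 \<sigma>2 unfolding sorting_perm_def by blast+
  fix a assume "a \<in> set (wds_terms n m F X \<sigma>1)"
  then obtain i where i: "i \<in> {1..n}" and a: "a = F (X (\<sigma>1 i)) (m (\<sigma>1 ` {i..n}))"
    unfolding set_wds_terms by blast
  obtain k where k: "k \<in> {1..n}" "X (\<sigma>2 k) = X (\<sigma>1 i)" "\<sigma>1 ` {i..n} \<subseteq> \<sigma>2 ` {k..n}"
    using sorting_perm_upper_set_subset[OF assms(1) X \<sigma>1 \<sigma>2 i] by blast
  have "\<sigma>2 ` {k..n} \<subseteq> \<sigma>2 ` {1..n}"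
    using k(1) by (intro image_mono) simp
  then have upper: "\<sigma>2 ` {k..n} \<subseteq> {1..n}"
    using permutes_image[OF perm2] by simp
  have "X (\<sigma>1 i) \<in> LI" using X i permutes_in_image[OF perm1] by blast
  moreover have "m (\<sigma>1 ` {i..n}) \<in> LI" "m (\<sigma>2 ` {k..n}) \<in> LI"
    using iv_fuzzy_measure_in_LI[OF assms(3)] k(3) upper by auto
  moreover have "le (m (\<sigma>1 ` {i..n})) (m (\<sigma>2 ` {k..n}))"
    using iv_fuzzy_measure_mono[OF assms(3) k(3) upper] .
  ultimately have "le a (F (X (\<sigma>2 k)) (m (\<sigma>2 ` {k..n})))"
    unfolding a k(2) using F_mono by blast
  moreover have "F (X (\<sigma>2 k)) (m (\<sigma>2 ` {k..n})) \<in> set (wds_terms n m F X \<sigma>2)"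
    unfolding set_wds_terms using k(1) by blast
  ultimately show "\<exists>b\<in>set (wds_terms n m F X \<sigma>2). le a b" by blast
qed

lemma WDS_ivmax:
  assumes "admissible_order le" "n \<ge> 1" "\<forall>X\<in>LI. \<forall>Y\<in>LI. F X Y \<in> LI" "iv_fuzzy_measure le n m"
    and "\<forall>X\<in>LI. \<forall>Y\<in>LI. \<forall>Z\<in>LI. le Y Z \<longrightarrow> le (F X Y) (F X Z)"
  shows "WDS le n m F (ivmax le)"
  unfolding WDS_iff
proof (intro allI impI)
  fix X \<sigma>1 \<sigma>2
  assume X: "\<forall>i\<in>{1..n}. X i \<in> LI"
    and \<sigma>1: "sorting_perm le n X \<sigma>1" and \<sigma>2: "sorting_perm le n X \<sigma>2"
  have nonempty: "wds_terms n m F X \<sigma> \<noteq> []" for \<sigma>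
    using assms(2) by (simp add: wds_terms_def)
  have "set (wds_terms n m F X \<sigma>1) \<subseteq> LI" "set (wds_terms n m F X \<sigma>2) \<subseteq> LI"
    using wds_terms_in_LI[OF assms(3,4) X] \<sigma>1 \<sigma>2 unfolding sorting_perm_def by blast+
  then show "ivmax le (wds_terms n m F X \<sigma>1) = ivmax le (wds_terms n m F X \<sigma>2)"
    by (rule ivmax_eqI[OF assms(1) _ nonempty _ nonempty
          wds_terms_dominated[OF assms(1,3,4,5) X \<sigma>1 \<sigma>2]
          wds_terms_dominated[OF assms(1,3,4,5) X \<sigma>2 \<sigma>1]])
qed

lemma WDS_hd:
  assumes "admissible_order le" "n \<ge> 1"
  shows "WDS le n m F hd"
  unfolding WDS_iff
proof (intro allI impI)
  fix X \<sigma>1 \<sigma>2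
  assume X: "\<forall>i\<in>{1..n}. X i \<in> LI"
    and \<sigma>1: "sorting_perm le n X \<sigma>1" and \<sigma>2: "sorting_perm le n X \<sigma>2"
  have "\<sigma>1 permutes {1..n}" "\<sigma>2 permutes {1..n}"
    using \<sigma>1 \<sigma>2 unfolding sorting_perm_def by blast+
  then show "hd (wds_terms n m F X \<sigma>1) = hd (wds_terms n m F X \<sigma>2)"
    using sorting_perm_first_eq[OF assms(1) X assms(2) \<sigma>1 \<sigma>2] by (simp add: hd_wds_terms[OF assms(2)])
qed

lemma WDS_comp:
  assumes "WDS le n m F G"
  shows "WDS le n m F (\<lambda>xs. f (G xs))"
  using assms unfolding WDS_iff by (intro allI impI arg_cong[where f = f]) blast

lemma ivmin_in_LI: "X \<in> LI \<Longrightarrow> Y \<in> LI \<Longrightarrow> ivmin le X Y \<in> LI"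
  unfolding ivmin_def by simp

lemma ivmin_mono_right:
  assumes "admissible_order le" "X \<in> LI" "Y \<in> LI" "Z \<in> LI" "le Y Z"
  shows "le (ivmin le X Y) (ivmin le X Z)"
proof (cases "le X Y")
  case True
  then have "le X Z" using admissible_order_trans[OF assms(1-4)] assms(5) by blast
  then show ?thesis using True admissible_order_refl[OF assms(1,2)] by (simp add: ivmin_def)
next
  case False
  then have "le Y X" using admissible_order_total[OF assms(1-3)] by blast
  then show ?thesis using False assms(5) by (simp add: ivmin_def)
qed

theorem corollary1:
  fixes n :: nat
    and le :: "ival \<Rightarrow> ival \<Rightarrow> bool"
    and F :: "ival \<Rightarrow> ival \<Rightarrow> ival"
    and G :: "ival list \<Rightarrow> ival"
    and m :: "nat set \<Rightarrow> ival"
  assumes "n \<ge> 1"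
    and "admissible_order le"
    and "\<forall>X\<in>LI. \<forall>Y\<in>LI. F X Y \<in> LI"
    and "\<forall>xs. length xs = n \<and> set xs \<subseteq> LI \<longrightarrow> G xs \<in> LI"
    and "iv_fuzzy_measure le n m"
  shows "((\<forall>X\<in>LI. \<forall>Y\<in>LI. \<forall>Z\<in>LI. le Y Z \<longrightarrow> le (F X Y) (F X Z))
            \<longrightarrow> WDS le n m F (ivmax le))
       \<and> ((\<exists>f. (\<forall>X\<in>LI. f X \<in> LI) \<and>
               (G = (\<lambda>xs. f (hd xs)) \<or> G = (\<lambda>xs. f (ivmax le xs))))
            \<longrightarrow> WDS le n m (ivmin le) G)
       \<and> WDS le n m (ivmin le) (ivmax le)"
proof (intro conjI impI)
  show "WDS le n m F (ivmax le)" if "\<forall>X\<in>LI. \<forall>Y\<in>LI. \<forall>Z\<in>LI. le Y Z \<longrightarrow> le (F X Y) (F X Z)"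
    using WDS_ivmax[OF assms(2,1,3,5) that] .
  show min_max: "WDS le n m (ivmin le) (ivmax le)"
  proof (rule WDS_ivmax[OF assms(2,1) _ assms(5)])
    show "\<forall>X\<in>LI. \<forall>Y\<in>LI. ivmin le X Y \<in> LI"
      using ivmin_in_LI by blast
    show "\<forall>X\<in>LI. \<forall>Y\<in>LI. \<forall>Z\<in>LI. le Y Z \<longrightarrow> le (ivmin le X Y) (ivmin le X Z)"
      using ivmin_mono_right[OF assms(2)] by blast
  qed
  show "WDS le n m (ivmin le) G"
    if "\<exists>f. (\<forall>X\<in>LI. f X \<in> LI) \<and> (G = (\<lambda>xs. f (hd xs)) \<or> G = (\<lambda>xs. f (ivmax le xs)))"
  proof -
    from that obtain f where "G = (\<lambda>xs. f (hd xs)) \<or> G = (\<lambda>xs. f (ivmax le xs))"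
      by (elim exE conjE)
    then show ?thesis
    proof
      assume "G = (\<lambda>xs. f (hd xs))"
      then show ?thesis using WDS_comp[OF WDS_hd[OF assms(2,1)]] by simp
    next
      assume "G = (\<lambda>xs. f (ivmax le xs))"
      then show ?thesis using WDS_comp[OF min_max] by simp
    qed
  qed
qed

end
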